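(* Let $n\ge 3$ and let $S\subseteq\mathbb{Z}_n\setminus\{0\}$ with $S=-S$. The circulant graph $\mathrm{Cay}(\mathbb{Z}_n,S)$ is $\mathbb{Z}_n$-distance antimagic if one of the following holds: (a) $n$ is even, $n/2\in S$, and, writing elements of $S$ as integers in $\{1,\ldots,n-1\}$, $S\setminus\{n/2\}$ contains exactly $2s$ even integers and $2t$ odd integers, where both $2(s-t)+1$ and $2(t-s)+1$ are coprime to $n$; (b) $\gcd(|S|,n)=1$. Moreover, if $|S|$ and $n$ are both even, then $\mathrm{Cay}(\mathbb{Z}_n,S)$ is not $\mathbb{Z}_n$-distance antimagic.
   Context: $\mathrm{Cay}(\mathbb{Z}_n,S)$ has vertex set $\mathbb{Z}_n$, with $x,y$ adjacent iff $x-y\in S$ (mod $n$). For a graph $G$ with $n$ vertices, a $\mathbb{Z}_n$-distance antimagic labelling is a bijection $f:V(G)\to\mathbb{Z}_n$ such that the weights $w_f(x)=\sum_{y\in N(x)} f(y)$ (mod $n$, $N(x)$ the open neighbourhood) are pairwise distinct; $G$ is $\mathbb{Z}_n$-distance antimagic if such a labelling exists. *)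

theory Defs
  imports Main
begin

text \<open>A Z_n-distance antimagic labelling (n = |V|) is a bijection f : V -> {0..<n}
  (representing Z_n) such that the weights w(x) = (sum of f over the open
  neighbourhood of x) mod n are pairwise distinct.\<close>

definition Zn_distance_antimagic :: "'a set \<Rightarrow> ('a \<Rightarrow> 'a \<Rightarrow> bool) \<Rightarrow> bool" where
  "Zn_distance_antimagic V E \<longleftrightarrow>
     (\<exists>f. bij_betw f V {0..<card V} \<and>
          inj_on (\<lambda>x. (\<Sum>y\<in>{y\<in>V. E x y}. f y) mod card V) V)"

definition cay_vertices :: "nat \<Rightarrow> nat set" where
  "cay_vertices n = {0..<n}"

definition cay_adj :: "nat \<Rightarrow> nat set \<Rightarrow> nat \<Rightarrow> nat \<Rightarrow> bool" where
  "cay_adj n S x y \<longleftrightarrow> (int x - int y) mod int n \<in> int ` S"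

end

theory Submission
  imports Defs
begin

(* The weight of x is the sum of the labels of the vertices x - s, s in S.  For the identity
   labelling it is |S| x - sum S, injective mod n when |S| is coprime to n.

   For even n the labelling y |-> y (y even), n - y (y odd) is y |-> (-1)^y y mod n, so the weight
   of x is (-1)^x sum_s (-1)^s (x - s).  Pairing s with n - s, which has the same parity, shows that
   sum_{s <> n/2} (-1)^s s vanishes mod n; what remains is
   (-1)^x (2k x + (-1)^(n/2) (x - n/2)) with 2k the number of even minus odd elements of S - {n/2}.
   This is congruent to x - n/2 mod 2, so equal weights force equal parity, and on a parity class it
   is affine in x with slope +-(2k +- 1), coprime to n.

   Conversely, weights that are distinct mod n sum to n(n-1)/2, which is n/2 mod n, whereas every
   label is counted |S| times in the total weight, which is therefore 0 mod n when |S| is even. *)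

section \<open>Weights in circulant graphs\<close>

definition cay_weight :: "nat \<Rightarrow> nat set \<Rightarrow> (nat \<Rightarrow> nat) \<Rightarrow> nat \<Rightarrow> nat" where
  "cay_weight n S f x = (\<Sum>y\<in>{y\<in>cay_vertices n. cay_adj n S x y}. f y)"

lemma Zn_distance_antimagic_cay_iff:
  "Zn_distance_antimagic (cay_vertices n) (cay_adj n S) \<longleftrightarrow>
     (\<exists>f. bij_betw f {0..<n} {0..<n} \<and> inj_on (\<lambda>x. cay_weight n S f x mod n) {0..<n})"
  by (simp add: Zn_distance_antimagic_def cay_weight_def cay_vertices_def)

lemma cay_weight_eq_sum_shift:
  assumes S: "S \<subseteq> {..<n}" and x: "x < n"
  shows "cay_weight n S f x = (\<Sum>s\<in>S. f (nat ((int x - int s) mod int n)))"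
  unfolding cay_weight_def cay_vertices_def
proof (rule sym, rule sum.reindex_bij_witness[where i="\<lambda>y. nat ((int x - int y) mod int n)"
                                                 and j="\<lambda>s. nat ((int x - int s) mod int n)"])
  fix s assume s: "s \<in> S"
  then have "s < n" using S by auto
  then show "nat ((int x - int (nat ((int x - int s) mod int n))) mod int n) = s"
            "nat ((int x - int s) mod int n) \<in> {y \<in> {0..<n}. cay_adj n S x y}"
    using s x by (auto simp: cay_adj_def nat_less_iff mod_diff_right_eq)
next
  fix y assume "y \<in> {y \<in> {0..<n}. cay_adj n S x y}"
  then show "nat ((int x - int (nat ((int x - int y) mod int n))) mod int n) = y"
            "nat ((int x - int y) mod int n) \<in> S"
    using x by (auto simp: cay_adj_def mod_diff_right_eq)
qed simp

lemma sum_shift_mod: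
  fixes g :: "nat \<Rightarrow> 'b::comm_monoid_add"
  assumes "n > 0"
  shows "(\<Sum>x\<in>{0..<n}. g (nat ((int x - int s) mod int n))) = (\<Sum>x\<in>{0..<n}. g x)"
proof (rule sum.reindex_bij_witness[where j="\<lambda>x. nat ((int x - int s) mod int n)"
                                      and i="\<lambda>y. nat ((int y + int s) mod int n)"])
  fix x assume "x \<in> {0..<n}"
  then show "nat ((int (nat ((int x - int s) mod int n)) + int s) mod int n) = x"
            "nat ((int x - int s) mod int n) \<in> {0..<n}"
    using assms by (simp_all add: mod_add_left_eq nat_less_iff)
next
  fix y assume "y \<in> {0..<n}"
  then show "nat ((int (nat ((int y + int s) mod int n)) - int s) mod int n) = y"
            "nat ((int y + int s) mod int n) \<in> {0..<n}"
    using assms by (simp_all add: mod_diff_left_eq nat_less_iff)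
qed simp

lemma sum_cay_weight:
  assumes "S \<subseteq> {..<n}" "n > 0"
  shows "(\<Sum>x\<in>{0..<n}. cay_weight n S f x) = card S * (\<Sum>x\<in>{0..<n}. f x)"
proof -
  have "(\<Sum>x\<in>{0..<n}. cay_weight n S f x)
      = (\<Sum>x\<in>{0..<n}. \<Sum>s\<in>S. f (nat ((int x - int s) mod int n)))"
    using assms(1) by (simp add: cay_weight_eq_sum_shift)
  also have "\<dots> = (\<Sum>s\<in>S. \<Sum>x\<in>{0..<n}. f (nat ((int x - int s) mod int n)))"
    by (rule sum.swap)
  also have "\<dots> = card S * (\<Sum>x\<in>{0..<n}. f x)"
    using sum_shift_mod[OF assms(2), of f] by simp
  finally show ?thesis .
qed

lemma eq_if_coprime_dvd_mult_diff:
  fixes c :: int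
  assumes "coprime c (int n)" "int n dvd c * (int x - int y)" "x < n" "y < n"
  shows "x = y"
proof -
  have "int n dvd int x - int y"
    using assms(1,2) by (simp add: coprime_commute coprime_dvd_mult_right_iff)
  moreover have "\<bar>int x - int y\<bar> < int n" using assms(3,4) by auto
  ultimately have "int x - int y = 0" by (metis abs_of_nat dvd_imp_le_int not_less)
  then show ?thesis by simp
qed

section \<open>Coprime valency\<close>

lemma cay_weight_id_mod:
  assumes "S \<subseteq> {..<n}" "x < n"
  shows "int (cay_weight n S id x mod n) = (int (card S) * int x - (\<Sum>s\<in>S. int s)) mod int n"
proof -
  have "int (cay_weight n S id x mod n) = (\<Sum>s\<in>S. (int x - int s) mod int n) mod int n"
    using assms by (simp add: cay_weight_eq_sum_shift of_nat_mod)
  also have "\<dots> = (int (card S) * int x - (\<Sum>s\<in>S. int s)) mod int n"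
    by (simp add: mod_sum_eq sum_subtractf)
  finally show ?thesis .
qed

lemma cay_antimagic_if_coprime_card:
  assumes S: "S \<subseteq> {..<n}" and cop: "coprime (card S) n"
  shows "Zn_distance_antimagic (cay_vertices n) (cay_adj n S)"
  unfolding Zn_distance_antimagic_cay_iff
proof (intro exI conjI)
  show "bij_betw id {0..<n} {0..<n}" by simp
  show "inj_on (\<lambda>x. cay_weight n S id x mod n) {0..<n}"
  proof (rule inj_onI)
    fix x y assume x: "x \<in> {0..<n}" and y: "y \<in> {0..<n}"
      and "cay_weight n S id x mod n = cay_weight n S id y mod n"
    then have "(int (card S) * int x - (\<Sum>s\<in>S. int s)) mod int n
             = (int (card S) * int y - (\<Sum>s\<in>S. int s)) mod int n"
      using cay_weight_id_mod[OF S] by (metis atLeastLessThan_iff)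
    then have "int n dvd int (card S) * (int x - int y)"
      by (simp add: mod_eq_dvd_iff right_diff_distrib)
    from eq_if_coprime_dvd_mult_diff[OF _ this] cop x y show "x = y" by simp
  qed
qed

section \<open>Even valency and even order\<close>

lemma even_not_dvd_sum_below:
  fixes n :: nat
  assumes "even n" "n > 0"
  shows "\<not> n dvd \<Sum>{0..<n}"
proof
  obtain m where n: "n = 2 * m" and m: "m > 0" using assms by auto
  have "\<Sum>{0..<n} = m * (2 * m - 1)"
    by (simp add: Sum_Ico_nat n)
  also have "\<dots> = n * (m - 1) + m"
    using m by (cases m) (simp_all add: n algebra_simps)
  finally have "n dvd \<Sum>{0..<n} \<longleftrightarrow> n dvd m"
    by (simp add: dvd_add_right_iff)
  moreover assume "n dvd \<Sum>{0..<n}"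
  ultimately show False using m n by (auto dest: dvd_imp_le)
qed

lemma cay_not_antimagic_if_even:
  assumes S: "S \<subseteq> {..<n}" and n: "n > 0" "even n" and "even (card S)"
  shows "\<not> Zn_distance_antimagic (cay_vertices n) (cay_adj n S)"
proof
  assume "Zn_distance_antimagic (cay_vertices n) (cay_adj n S)"
  then obtain f where bij: "bij_betw f {0..<n} {0..<n}"
    and inj: "inj_on (\<lambda>x. cay_weight n S f x mod n) {0..<n}"
    unfolding Zn_distance_antimagic_cay_iff by blast
  obtain c where c: "card S = 2 * c" using \<open>even (card S)\<close> by blast
  have "(\<lambda>x. cay_weight n S f x mod n) ` {0..<n} = {0..<n}"
    by (rule endo_inj_surj) (use inj n in auto)
  then have "\<Sum>{0..<n} = (\<Sum>x\<in>{0..<n}. cay_weight n S f x mod n)"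
    using sum.reindex[OF inj, of id] by simp
  also have "\<dots> mod n = (\<Sum>x\<in>{0..<n}. cay_weight n S f x) mod n"
    by (rule mod_sum_eq)
  also have "(\<Sum>x\<in>{0..<n}. cay_weight n S f x) = card S * \<Sum>{0..<n}"
    using sum_cay_weight[OF S n(1)] sum.reindex_bij_betw[OF bij, of id] by simp
  also have "\<dots> = c * (2 * \<Sum>{0..<n})"
    using c by simp
  also have "2 * \<Sum>{0..<n} = n * (n - 1)"
    using n(2) by (simp add: Sum_Ico_nat dvd_mult_div_cancel)
  finally have "n dvd \<Sum>{0..<n}"
    by (simp add: mod_eq_0_iff_dvd)
  then show False
    using even_not_dvd_sum_below[OF n(2,1)] by blast
qed

section \<open>The alternating labelling\<close>

definition alternating_label :: "nat \<Rightarrow> nat \<Rightarrow> nat" where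
  "alternating_label n y = (if even y then y else n - y)"

lemma bij_alternating_label:
  assumes "even n"
  shows "bij_betw (alternating_label n) {0..<n} {0..<n}"
proof -
  have inv: "\<forall>y\<in>{0..<n}. alternating_label n (alternating_label n y) = y"
    using assms by (auto simp: alternating_label_def even_add)
  have img: "alternating_label n ` {0..<n} \<subseteq> {0..<n}"
    by (auto simp: alternating_label_def odd_pos)
  show ?thesis using bij_betw_byWitness[OF inv inv img img] .
qed

lemma alternating_label_mod:
  assumes "y < n"
  shows "int (alternating_label n y) mod int n = ((-1) ^ y * int y) mod int n"
proof (cases "even y")
  case False
  have "(int n - int y) mod int n = (- int y) mod int n"
    by (metis diff_0 mod_diff_left_eq mod_self)
  then show ?thesis using False assms by (simp add: alternating_label_def of_nat_diff)
qed (simp add: alternating_label_def)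

lemma even_nat_diff_mod_iff:
  assumes "even n" "n > 0"
  shows "even (nat ((int x - int s) mod int n)) \<longleftrightarrow> even (x + s)"
proof -
  have "even ((int x - int s) mod int n) \<longleftrightarrow> even (int x - int s)"
    using assms(1) by (simp add: dvd_mod_iff)
  then show ?thesis using assms(2) by (simp add: even_nat_iff)
qed

lemma alternating_label_shift_mod:
  assumes "even n" "n > 0"
  shows "int (alternating_label n (nat ((int x - int s) mod int n))) mod int n
       = ((-1) ^ (x + s) * (int x - int s)) mod int n"
proof -
  let ?y = "nat ((int x - int s) mod int n)"
  have "int (alternating_label n ?y) mod int n = ((-1) ^ ?y * int ?y) mod int n"
    by (rule alternating_label_mod) (simp add: assms nat_less_iff)
  also have "(-1::int) ^ ?y = (-1) ^ (x + s)"
    using even_nat_diff_mod_iff[OF assms] by (simp add: minus_one_power_iff)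
  also have "((-1) ^ (x + s) * int ?y) mod int n = ((-1) ^ (x + s) * (int x - int s)) mod int n"
    using assms by (simp add: mod_mult_right_eq)
  finally show ?thesis .
qed

lemma sum_reflect_weighted:
  fixes g :: "nat \<Rightarrow> int"
  assumes "finite T" "\<forall>a\<in>T. a \<le> n \<and> n - a \<in> T" "\<forall>a\<in>T. g (n - a) = g a"
  shows "2 * (\<Sum>a\<in>T. g a * int a) = int n * (\<Sum>a\<in>T. g a)"
proof -
  have "(\<Sum>a\<in>T. g a * int a) = (\<Sum>a\<in>T. g (n - a) * int (n - a))"
    by (rule sum.reindex_bij_witness[where i="\<lambda>a. n - a" and j="\<lambda>a. n - a"]) (use assms(2) in auto)
  also have "\<dots> = (\<Sum>a\<in>T. int n * g a - g a * int a)"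
    by (rule sum.cong) (use assms(2,3) in \<open>auto simp: of_nat_diff algebra_simps\<close>)
  also have "\<dots> = int n * (\<Sum>a\<in>T. g a) - (\<Sum>a\<in>T. g a * int a)"
    by (simp add: sum_subtractf sum_distrib_left)
  finally show ?thesis by simp
qed

lemma sum_minus_one_power:
  assumes "finite T"
  shows "(\<Sum>a\<in>T. (-1::int) ^ a) = int (card {a\<in>T. even a}) - int (card {a\<in>T. odd a})"
proof -
  have "T = {a\<in>T. even a} \<union> {a\<in>T. odd a}" by auto
  then have "(\<Sum>a\<in>T. (-1::int) ^ a) = (\<Sum>a\<in>{a\<in>T. even a}. (-1) ^ a) + (\<Sum>a\<in>{a\<in>T. odd a}. (-1) ^ a)"
    using assms by (metis (no_types, lifting) sum.union_disjoint disjoint_iff finite_Un mem_Collect_eq)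
  then show ?thesis by simp
qed

lemma cay_weight_alternating_label_mod:
  assumes n: "even n" "n > 0" and S: "S \<subseteq> {..<n}" "\<forall>s\<in>S. n - s \<in> S" "n div 2 \<in> S"
    and k: "int (card {s \<in> S - {n div 2}. even s}) - int (card {s \<in> S - {n div 2}. odd s}) = 2 * k"
    and x: "x < n"
  shows "int (cay_weight n S (alternating_label n) x mod n)
       = ((-1) ^ x * (2 * k * int x + (-1) ^ (n div 2) * (int x - int (n div 2)))) mod int n"
proof -
  define m where "m = n div 2"
  define T where "T = S - {m}"
  have fin: "finite T" using S(1) unfolding T_def by (simp add: finite_subset)
  have S_eq: "S = insert m T" "m \<notin> T" using S(3) unfolding T_def m_def by auto
  have reflect: "\<forall>a\<in>T. a \<le> n \<and> n - a \<in> T"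
    using S(1,2) n(1) unfolding T_def m_def by fastforce
  have sign_reflect: "\<forall>a\<in>T. (-1::int) ^ (n - a) = (-1) ^ a"
    using reflect n(1) by (auto simp: minus_one_power_iff even_add)
  have signs: "(\<Sum>s\<in>T. (-1::int) ^ s) = 2 * k"
    using sum_minus_one_power[OF fin] k unfolding T_def m_def by simp
  have "2 * (\<Sum>s\<in>T. (-1) ^ s * int s) = int n * (2 * k)"
    using sum_reflect_weighted[OF fin reflect sign_reflect] signs by simp
  then have moments: "(\<Sum>s\<in>T. (-1) ^ s * int s) = int n * k" by simp
  have "int (cay_weight n S (alternating_label n) x mod n)
      = (\<Sum>s\<in>S. int (alternating_label n (nat ((int x - int s) mod int n))) mod int n) mod int n"
    using S(1) x by (simp add: cay_weight_eq_sum_shift of_nat_mod mod_sum_eq)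
  also have "\<dots> = (\<Sum>s\<in>S. (-1) ^ (x + s) * (int x - int s)) mod int n"
    by (simp add: alternating_label_shift_mod[OF n] mod_sum_eq)
  also have "(\<Sum>s\<in>S. (-1) ^ (x + s) * (int x - int s))
      = (-1) ^ x * ((-1) ^ m * (int x - int m) + (\<Sum>s\<in>T. (-1) ^ s * (int x - int s)))"
    using fin S_eq by (simp add: power_add sum_distrib_left algebra_simps)
  also have "(\<Sum>s\<in>T. (-1) ^ s * (int x - int s))
      = int x * (\<Sum>s\<in>T. (-1) ^ s) - (\<Sum>s\<in>T. (-1) ^ s * int s)"
    by (simp add: right_diff_distrib sum_subtractf sum_distrib_left ac_simps)
  also have "\<dots> = 2 * k * int x - int n * k"
    using signs moments by simp
  also have "(-1) ^ x * ((-1) ^ m * (int x - int m) + (2 * k * int x - int n * k))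
      = (-1) ^ x * (2 * k * int x + (-1) ^ m * (int x - int m)) + (- ((-1) ^ x * k)) * int n"
    by (simp add: algebra_simps)
  finally show ?thesis unfolding m_def by (simp only: mod_mult_self1)
qed

lemma alternating_affine_inj_mod:
  fixes k :: int
  assumes n: "even n" and cop: "coprime (2 * k + 1) (int n)" "coprime (2 * k - 1) (int n)"
    and x: "x < n" and y: "y < n"
    and eq: "((-1) ^ x * (2 * k * int x + (-1) ^ m * (int x - int m))) mod int n
           = ((-1) ^ y * (2 * k * int y + (-1) ^ m * (int y - int m))) mod int n"
  shows "x = y"
proof -
  define H where "H z = (-1) ^ z * (2 * k * int z + (-1) ^ m * (int z - int m))" for z :: nat
  have dvd: "int n dvd H x - H y"
    using eq by (simp add: H_def mod_eq_dvd_iff)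
  have parity: "even (H z - (int z - int m))" for z
    by (cases "even z"; cases "even m") (auto simp: H_def minus_one_power_iff algebra_simps)
  have "even (H x - H y)"
    using dvd n by (meson dvd_trans even_of_nat)
  then have "even ((H x - H y) - (H x - (int x - int m)) + (H y - (int y - int m)))"
    using dvd_add[OF dvd_diff[OF _ parity] parity] by blast
  then have "even (int x - int y)"
    by (simp add: algebra_simps)
  then have sign: "(-1::int) ^ y = (-1) ^ x"
    by (auto simp: minus_one_power_iff)
  have "H x - H y = ((-1) ^ x * (2 * k + (-1) ^ m)) * (int x - int y)"
    by (simp add: H_def sign algebra_simps)
  moreover have "coprime ((-1) ^ x * (2 * k + (-1) ^ m)) (int n)"
    using cop by (auto simp: minus_one_power_iff)
  ultimately show ?thesis
    using eq_if_coprime_dvd_mult_diff x y dvd by metis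
qed

lemma cay_antimagic_by_alternating_label:
  assumes n: "even n" and S: "S \<subseteq> {..<n}" "\<forall>s\<in>S. n - s \<in> S" "n div 2 \<in> S"
    and k: "int (card {s \<in> S - {n div 2}. even s}) - int (card {s \<in> S - {n div 2}. odd s}) = 2 * k"
    and cop: "coprime (2 * k + 1) (int n)" "coprime (2 * k - 1) (int n)"
  shows "Zn_distance_antimagic (cay_vertices n) (cay_adj n S)"
  unfolding Zn_distance_antimagic_cay_iff
proof (intro exI conjI)
  have "n > 0" using S(1,3) by auto
  show "bij_betw (alternating_label n) {0..<n} {0..<n}"
    by (rule bij_alternating_label[OF n])
  show "inj_on (\<lambda>x. cay_weight n S (alternating_label n) x mod n) {0..<n}"
  proof (rule inj_onI)
    fix x y assume x: "x \<in> {0..<n}" and y: "y \<in> {0..<n}"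
      and "cay_weight n S (alternating_label n) x mod n = cay_weight n S (alternating_label n) y mod n"
    then have "int (cay_weight n S (alternating_label n) x mod n)
             = int (cay_weight n S (alternating_label n) y mod n)" by simp
    then show "x = y"
      using cay_weight_alternating_label_mod[OF n \<open>n > 0\<close> S k, of x]
        cay_weight_alternating_label_mod[OF n \<open>n > 0\<close> S k, of y] x y
      by (intro alternating_affine_inj_mod[OF n cop, of x y "n div 2"]) simp_all
  qed
qed

theorem mainTheorem19:
  fixes n :: nat and S :: "nat set"
  assumes n3: "n \<ge> 3"
    and S_sub: "S \<subseteq> {1..<n}"
    and S_sym: "\<forall>x\<in>S. n - x \<in> S"
  shows "(((even n \<and> n div 2 \<in> S \<and>
            (\<exists>s t. card {x \<in> S - {n div 2}. even x} = 2 * s \<and>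
                   card {x \<in> S - {n div 2}. odd x} = 2 * t \<and>
                   coprime (2 * (int s - int t) + 1) (int n) \<and>
                   coprime (2 * (int t - int s) + 1) (int n)))
          \<or> coprime (card S) n)
         \<longrightarrow> Zn_distance_antimagic (cay_vertices n) (cay_adj n S))
         \<and> (even (card S) \<and> even n
         \<longrightarrow> \<not> Zn_distance_antimagic (cay_vertices n) (cay_adj n S))"
proof (intro conjI impI)
  have S: "S \<subseteq> {..<n}" using S_sub by auto
  show "\<not> Zn_distance_antimagic (cay_vertices n) (cay_adj n S)" if "even (card S) \<and> even n"
    using cay_not_antimagic_if_even[OF S] that n3 by simp
  assume "(even n \<and> n div 2 \<in> S \<and>
            (\<exists>s t. card {x \<in> S - {n div 2}. even x} = 2 * s \<and>
                   card {x \<in> S - {n div 2}. odd x} = 2 * t \<and>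
                   coprime (2 * (int s - int t) + 1) (int n) \<and>
                   coprime (2 * (int t - int s) + 1) (int n)))
          \<or> coprime (card S) n"
  then show "Zn_distance_antimagic (cay_vertices n) (cay_adj n S)"
  proof (elim disjE conjE exE)
    fix s t
    assume n: "even n" and half: "n div 2 \<in> S"
      and "card {x \<in> S - {n div 2}. even x} = 2 * s" "card {x \<in> S - {n div 2}. odd x} = 2 * t"
      and cop: "coprime (2 * (int s - int t) + 1) (int n)" "coprime (2 * (int t - int s) + 1) (int n)"
    then have "int (card {x \<in> S - {n div 2}. even x}) - int (card {x \<in> S - {n div 2}. odd x})
             = 2 * (int s - int t)" by simp
    moreover have "2 * (int t - int s) + 1 = - (2 * (int s - int t) - 1)" by simp
    ultimately show ?thesis
      using cay_antimagic_by_alternating_label[OF n S S_sym half] cop by (metis coprime_minus_left_iff)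
  qed (rule cay_antimagic_if_coprime_card[OF S])
qed

end
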